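(* For any metrized graph $\Gamma$ with $v$ vertices, $$Kf(\Gamma) \leq \frac{v^2}{4}\, y(\Gamma).$$
   Context: A metrized graph $\Gamma$ is a finite connected graph (multiple edges and self-loops allowed) each of whose edges is identified with a closed segment of positive length, with a finite nonempty vertex set $V(\Gamma)$ containing every point of valence $\neq2$; $v=\#V(\Gamma)$, $L_i$ the length of $e_i$, $r$ the effective resistance (edges as resistors of resistance equal to length). $Kf(\Gamma)=\frac12\sum_{p,q\in V(\Gamma)}r(p,q)$. For an edge $e_i$ with end points $p_i,q_i$: if $\Gamma-e_i$ (interior deleted) is connected, $R_i$ is the effective resistance between $p_i,q_i$ in $\Gamma-e_i$, $R_{a_i,p}=\hat j_{p_i}(p,q_i)$, $R_{b_i,p}=\hat j_{q_i}(p,p_i)$ with $\hat j_z(x,y)$ the voltage function of $\Gamma-e_i$ (potential at $x$ when unit current enters at $y$ and exits at $z$, potential $0$ at $z$); if $e_i$ is a bridge, $R_{a_i,p}=0,R_{b_i,p}=R_i$ for $p$ in the component of $\Gamma-e_i$ containing $p_i$ and $R_{a_i,p}=R_i,R_{b_i,p}=0$ otherwise, with every expression in $R_i$ interpreted as its limit as $R_i\to\infty$; for a self-loop $R_i=0$. For a fixed vertex $p$ (independent of choice), $y(\Gamma)=\frac14\sum_{e_i}\frac{L_iR_i^2}{(L_i+R_i)^2}+\frac34\sum_{e_i}\frac{L_i(R_{a_i,p}-R_{b_i,p})^2}{(L_i+R_i)^2}$. *)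

theory Defs
  imports Complex_Main
begin

text \<open>A metrized graph is presented combinatorially: a finite nonempty vertex set V,
  a finite set E of edge labels, each edge e having end points src e, tgt e in V
  (src e = tgt e for a self-loop; multiple edges allowed) and length len e > 0.
  Interior points of edges have valence 2, so every point of valence other than 2 lies in V.\<close>

definition edge_rel :: "'e set \<Rightarrow> ('e \<Rightarrow> 'v) \<Rightarrow> ('e \<Rightarrow> 'v) \<Rightarrow> ('v \<times> 'v) set" where
  "edge_rel E src tgt = {(src e, tgt e) | e. e \<in> E} \<union> {(tgt e, src e) | e. e \<in> E}"

definition connected_net :: "'v set \<Rightarrow> 'e set \<Rightarrow> ('e \<Rightarrow> 'v) \<Rightarrow> ('e \<Rightarrow> 'v) \<Rightarrow> bool" where
  "connected_net V E src tgt \<longleftrightarrow> (\<forall>x\<in>V. \<forall>y\<in>V. (x, y) \<in> (edge_rel E src tgt)\<^sup>*)"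

definition metrized_graph ::
  "'v set \<Rightarrow> 'e set \<Rightarrow> ('e \<Rightarrow> 'v) \<Rightarrow> ('e \<Rightarrow> 'v) \<Rightarrow> ('e \<Rightarrow> real) \<Rightarrow> bool" where
  "metrized_graph V E src tgt len \<longleftrightarrow>
     finite V \<and> V \<noteq> {} \<and> finite E \<and>
     (\<forall>e\<in>E. src e \<in> V \<and> tgt e \<in> V \<and> len e > 0) \<and>
     connected_net V E src tgt"

text \<open>Kirchhoff conditions: f is the potential (supported on V) of the resistor network
  (edge e = resistor of resistance len e) when unit current enters at y and exits at z,
  normalised by f z = 0.\<close>

definition is_voltage ::
  "'v set \<Rightarrow> 'e set \<Rightarrow> ('e \<Rightarrow> 'v) \<Rightarrow> ('e \<Rightarrow> 'v) \<Rightarrow> ('e \<Rightarrow> real) \<Rightarrow> 'v \<Rightarrow> 'v \<Rightarrow> ('v \<Rightarrow> real) \<Rightarrow> bool" where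
  "is_voltage V E src tgt len y z f \<longleftrightarrow>
     (\<forall>w. w \<notin> V \<longrightarrow> f w = 0) \<and> f z = 0 \<and>
     (\<forall>w\<in>V. (\<Sum>e\<in>E. (if src e = w then (f w - f (tgt e)) / len e else 0)
                   + (if tgt e = w then (f w - f (src e)) / len e else 0))
            = (if w = y then 1 else 0) - (if w = z then 1 else 0))"

text \<open>Voltage function j_z(x,y): potential at x when unit current enters at y and exits
  at z, with potential 0 at z.\<close>

definition voltage ::
  "'v set \<Rightarrow> 'e set \<Rightarrow> ('e \<Rightarrow> 'v) \<Rightarrow> ('e \<Rightarrow> 'v) \<Rightarrow> ('e \<Rightarrow> real) \<Rightarrow> 'v \<Rightarrow> 'v \<Rightarrow> 'v \<Rightarrow> real" where
  "voltage V E src tgt len z x y = (THE f. is_voltage V E src tgt len y z f) x"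

definition eff_res ::
  "'v set \<Rightarrow> 'e set \<Rightarrow> ('e \<Rightarrow> 'v) \<Rightarrow> ('e \<Rightarrow> 'v) \<Rightarrow> ('e \<Rightarrow> real) \<Rightarrow> 'v \<Rightarrow> 'v \<Rightarrow> real" where
  "eff_res V E src tgt len x y = voltage V E src tgt len y x x"

definition kirchhoff_index ::
  "'v set \<Rightarrow> 'e set \<Rightarrow> ('e \<Rightarrow> 'v) \<Rightarrow> ('e \<Rightarrow> 'v) \<Rightarrow> ('e \<Rightarrow> real) \<Rightarrow> real" where
  "kirchhoff_index V E src tgt len =
     (1/2) * (\<Sum>p\<in>V. \<Sum>q\<in>V. eff_res V E src tgt len p q)"

text \<open>Summand of the first sum of y(Gamma) for edge e.  Gamma - e has vertex set V and
  edge set E - {e}.  For a bridge the expression is its limit as R_i \<rightarrow> \<infinity>.\<close>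

definition y_term1 ::
  "'v set \<Rightarrow> 'e set \<Rightarrow> ('e \<Rightarrow> 'v) \<Rightarrow> ('e \<Rightarrow> 'v) \<Rightarrow> ('e \<Rightarrow> real) \<Rightarrow> 'e \<Rightarrow> real" where
  "y_term1 V E src tgt len e =
     (if connected_net V (E - {e}) src tgt then
        (let R = eff_res V (E - {e}) src tgt len (src e) (tgt e)
         in len e * R\<^sup>2 / (len e + R)\<^sup>2)
      else Lim at_top (\<lambda>R::real. len e * R\<^sup>2 / (len e + R)\<^sup>2))"

definition y_term2 ::
  "'v set \<Rightarrow> 'e set \<Rightarrow> ('e \<Rightarrow> 'v) \<Rightarrow> ('e \<Rightarrow> 'v) \<Rightarrow> ('e \<Rightarrow> real) \<Rightarrow> 'v \<Rightarrow> 'e \<Rightarrow> real" where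
  "y_term2 V E src tgt len p e =
     (if connected_net V (E - {e}) src tgt then
        (let R = eff_res V (E - {e}) src tgt len (src e) (tgt e);
             Ra = voltage V (E - {e}) src tgt len (src e) p (tgt e);
             Rb = voltage V (E - {e}) src tgt len (tgt e) p (src e)
         in len e * (Ra - Rb)\<^sup>2 / (len e + R)\<^sup>2)
      else if (p, src e) \<in> (edge_rel (E - {e}) src tgt)\<^sup>*
      then Lim at_top (\<lambda>R::real. len e * (0 - R)\<^sup>2 / (len e + R)\<^sup>2)
      else Lim at_top (\<lambda>R::real. len e * (R - 0)\<^sup>2 / (len e + R)\<^sup>2))"

definition y_inv ::
  "'v set \<Rightarrow> 'e set \<Rightarrow> ('e \<Rightarrow> 'v) \<Rightarrow> ('e \<Rightarrow> 'v) \<Rightarrow> ('e \<Rightarrow> real) \<Rightarrow> 'v \<Rightarrow> real" where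
  "y_inv V E src tgt len p =
     (1/4) * (\<Sum>e\<in>E. y_term1 V E src tgt len e)
     + (3/4) * (\<Sum>e\<in>E. y_term2 V E src tgt len p e)"

end

theory Submission
  imports Defs "Jordan_Normal_Form.Determinant"
begin

text \<open>For an edge e with end points a, b write s_e(p) = r(a,p) - r(b,p). The identity
  2 j_z(x,y) = r(x,z) + r(y,z) - r(x,y) turns the energy of the unit current from p to q into
  r(p,q) = \<Sum>_e (s_e(q) - s_e(p))^2 / (4 L_e). Summing over p and q and using
  \<Sum>_{p,q} (x_q - x_p)^2 \<le> 2 v \<Sum>_p x_p^2 for each edge gives Kf \<le> (v/4) \<Sum>_p E(p)
  with E(p) = \<Sum>_e s_e(p)^2 / L_e, and E(p) does not depend on p; so Kf \<le> v^2/4 E(p).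
  Finally E(p) \<le> y(\<Gamma>) edge by edge: the unit current from a to b splits in parallel
  between e and \<Gamma> - e, so r(a,b) = L R / (L + R) and s_e(p) = L (R_a - R_b) / (L + R).
  Thus s_e(p)^2 / L_e is the e-summand of the second sum of y, and it is at most the
  e-summand of the first sum because |s_e(p)| \<le> r(a,b) by the maximum principle.
  For a bridge both summands equal L_e \<ge> s_e(p)^2 / L_e.\<close>

lemma square_mat_solvable_if_kernel_trivial:
  fixes A :: "'a :: field mat"
  assumes A: "A \<in> carrier_mat n n"
    and ker: "\<And>x. x \<in> carrier_vec n \<Longrightarrow> A *\<^sub>v x = 0\<^sub>v n \<Longrightarrow> x = 0\<^sub>v n"
    and b: "b \<in> carrier_vec n"
  shows "\<exists>x \<in> carrier_vec n. A *\<^sub>v x = b"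
proof -
  have "det A \<noteq> 0"
    using det_0_iff_vec_prod_zero_field[OF A] ker by blast
  from det_non_zero_imp_unit[OF A this, of "()"]
  obtain B where B: "B \<in> carrier_mat n n" "A * B = 1\<^sub>m n"
    unfolding Units_def ring_mat_def by auto
  have "A *\<^sub>v (B *\<^sub>v b) = (A * B) *\<^sub>v b"
    using assoc_mult_mat_vec[OF A B(1) b] by simp
  also have "\<dots> = b" using B(2) b by simp
  finally show ?thesis using B(1) b by (intro bexI[of _ "B *\<^sub>v b"]) auto
qed

lemma additive_homogeneous_sum:
  fixes F :: "('v \<Rightarrow> real) \<Rightarrow> 'v \<Rightarrow> real" and n :: nat
  assumes add: "\<And>f g. F (\<lambda>w. f w + g w) = (\<lambda>w. F f w + F g w)"
    and scale: "\<And>c f. F (\<lambda>w. c * f w) = (\<lambda>w. c * F f w)"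
  shows "F (\<lambda>w. \<Sum>j<n. c j * u j w) w = (\<Sum>j<n. c j * F (u j) w)"
proof (induction n)
  case 0
  show ?case using scale[of 0 "\<lambda>w. 0"] by simp
next
  case (Suc n)
  have "F (\<lambda>w. \<Sum>j<Suc n. c j * u j w) = F (\<lambda>w. (\<Sum>j<n. c j * u j w) + c n * u n w)"
    by simp
  also have "\<dots> = (\<lambda>w. F (\<lambda>w. \<Sum>j<n. c j * u j w) w + F (\<lambda>w. c n * u n w) w)"
    by (rule add)
  finally show ?case using Suc scale by simp
qed

lemma supported_linear_inj_imp_surj:
  fixes F :: "('v \<Rightarrow> real) \<Rightarrow> 'v \<Rightarrow> real"
  assumes fin: "finite V"
    and add: "\<And>f g. F (\<lambda>w. f w + g w) = (\<lambda>w. F f w + F g w)"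
    and scale: "\<And>c f. F (\<lambda>w. c * f w) = (\<lambda>w. c * F f w)"
    and inj: "\<And>f. \<forall>w. w \<notin> V \<longrightarrow> f w = 0 \<Longrightarrow> \<forall>w\<in>V. F f w = 0 \<Longrightarrow> \<forall>w\<in>V. f w = 0"
  shows "\<exists>f. (\<forall>w. w \<notin> V \<longrightarrow> f w = 0) \<and> (\<forall>w\<in>V. F f w = g w)"
proof -
  define n where "n = card V"
  obtain \<nu> where \<nu>: "bij_betw \<nu> {0..<n} V"
    using ex_bij_betw_nat_finite[OF fin] n_def by blast
  define u where "u j = (\<lambda>w. if w = \<nu> j then 1 else (0::real))" for j
  define A where "A = mat n n (\<lambda>(i, j). F (u j) (\<nu> i))"
  define fun_of where "fun_of x = (\<lambda>w. \<Sum>j<n. x $ j * u j w)" for x :: "real vec"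
  have A: "A \<in> carrier_mat n n" by (simp add: A_def)
  have fun_of_outside: "fun_of x w = 0" if "w \<notin> V" for x w
    using \<nu> that unfolding fun_of_def u_def bij_betw_def by (auto intro!: sum.neutral)
  have fun_of_\<nu>: "fun_of x (\<nu> j) = x $ j" if "j < n" for x j
  proof -
    have "fun_of x (\<nu> j) = (\<Sum>k<n. if k = j then x $ k else 0)"
      unfolding fun_of_def u_def
      using \<nu> that by (intro sum.cong) (auto simp: bij_betw_def inj_on_def)
    then show ?thesis using that by simp
  qed
  have A_mult: "(A *\<^sub>v x) $ i = F (fun_of x) (\<nu> i)" if "i < n" "x \<in> carrier_vec n" for x i
  proof -
    have "(A *\<^sub>v x) $ i = (\<Sum>j<n. x $ j * F (u j) (\<nu> i))"
      using that by (simp add: A_def scalar_prod_def lessThan_atLeast0 mult.commute)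
    also have "\<dots> = F (fun_of x) (\<nu> i)"
      unfolding fun_of_def by (rule additive_homogeneous_sum[symmetric, OF add scale])
    finally show ?thesis .
  qed
  have kernel_trivial: "x = 0\<^sub>v n" if x: "x \<in> carrier_vec n" "A *\<^sub>v x = 0\<^sub>v n" for x
  proof -
    have "\<forall>w\<in>V. F (fun_of x) w = 0"
      using \<nu> A_mult[OF _ x(1)] x(2) unfolding bij_betw_def by (auto dest!: arg_cong[of _ _ "\<lambda>v. v $ _"])
    then have "\<forall>w\<in>V. fun_of x w = 0"
      using inj fun_of_outside by blast
    then show ?thesis
      using x(1) \<nu> fun_of_\<nu> by (intro eq_vecI) (auto simp: bij_betw_def)
  qed
  then obtain x where x: "x \<in> carrier_vec n" "A *\<^sub>v x = vec n (\<lambda>i. g (\<nu> i))"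
    using square_mat_solvable_if_kernel_trivial[OF A kernel_trivial, of "vec n (\<lambda>i. g (\<nu> i))"]
    by auto
  then have "\<forall>w\<in>V. F (fun_of x) w = g w"
    using A_mult[OF _ x(1)] \<nu> unfolding bij_betw_def by force
  then show ?thesis using fun_of_outside by blast
qed

definition laplacian ::
  "'e set \<Rightarrow> ('e \<Rightarrow> 'v) \<Rightarrow> ('e \<Rightarrow> 'v) \<Rightarrow> ('e \<Rightarrow> real) \<Rightarrow> ('v \<Rightarrow> real) \<Rightarrow> 'v \<Rightarrow> real" where
  "laplacian E src tgt len f w =
     (\<Sum>e\<in>E. (if src e = w then (f w - f (tgt e)) / len e else 0)
            + (if tgt e = w then (f w - f (src e)) / len e else 0))"

definition dirichlet_form ::
  "'e set \<Rightarrow> ('e \<Rightarrow> 'v) \<Rightarrow> ('e \<Rightarrow> 'v) \<Rightarrow> ('e \<Rightarrow> real) \<Rightarrow> ('v \<Rightarrow> real) \<Rightarrow> ('v \<Rightarrow> real) \<Rightarrow> real"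
  where
  "dirichlet_form E src tgt len f g = (\<Sum>e\<in>E. (f (src e) - f (tgt e)) * (g (src e) - g (tgt e)) / len e)"

lemma is_voltage_iff_laplacian:
  "is_voltage V E src tgt len y z f \<longleftrightarrow>
     (\<forall>w. w \<notin> V \<longrightarrow> f w = 0) \<and> f z = 0 \<and>
     (\<forall>w\<in>V. laplacian E src tgt len f w = (if w = y then 1 else 0) - (if w = z then 1 else 0))"
  unfolding is_voltage_def laplacian_def by simp

lemma laplacian_add:
  "laplacian E src tgt len (\<lambda>w. f w + g w) w = laplacian E src tgt len f w + laplacian E src tgt len g w"
  unfolding laplacian_def sum.distrib[symmetric]
  by (rule sum.cong) (auto simp: diff_divide_distrib add_divide_distrib)

lemma laplacian_diff:
  "laplacian E src tgt len (\<lambda>w. f w - g w) w = laplacian E src tgt len f w - laplacian E src tgt len g w"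
  unfolding laplacian_def sum_subtractf[symmetric]
  by (rule sum.cong) (auto simp: diff_divide_distrib add_divide_distrib)

lemma laplacian_scale:
  "laplacian E src tgt len (\<lambda>w. c * f w) w = c * laplacian E src tgt len f w"
  unfolding laplacian_def sum_distrib_left by (rule sum.cong) (auto simp: algebra_simps)

lemma laplacian_remove_edge:
  assumes "finite E" "e \<in> E"
  shows "laplacian E src tgt len f w = laplacian (E - {e}) src tgt len f w
     + ((if src e = w then (f w - f (tgt e)) / len e else 0)
        + (if tgt e = w then (f w - f (src e)) / len e else 0))"
  unfolding laplacian_def by (subst sum.remove[OF assms]) (rule add.commute)

lemma truncation_sq_le:
  fixes m :: "real \<Rightarrow> real"
  assumes "mono m" "mono (\<lambda>t. t - m t)"
  shows "(m x - m y)\<^sup>2 \<le> (m x - m y) * (x - y)"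
proof -
  have "0 \<le> (m x - m y) * ((x - m x) - (y - m y))"
  proof (cases "y \<le> x")
    case True
    then have "m y \<le> m x" "y - m y \<le> x - m x" using assms unfolding mono_def by auto
    then show ?thesis by (intro mult_nonneg_nonneg) auto
  next
    case False
    then have "m x \<le> m y" "x - m x \<le> y - m y" using assms unfolding mono_def by auto
    then show ?thesis by (intro mult_nonpos_nonpos) auto
  qed
  then show ?thesis by (simp add: power2_eq_square algebra_simps)
qed

lemma sum_sq_diff_le:
  fixes x :: "'v \<Rightarrow> real"
  shows "(\<Sum>p\<in>V. \<Sum>q\<in>V. (x q - x p)\<^sup>2) \<le> 2 * real (card V) * (\<Sum>p\<in>V. (x p)\<^sup>2)"
proof -
  have "(\<Sum>p\<in>V. \<Sum>q\<in>V. (x q - x p)\<^sup>2) = (\<Sum>p\<in>V. \<Sum>q\<in>V. (x q)\<^sup>2 + (x p)\<^sup>2 - 2 * x p * x q)"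
    by (intro sum.cong refl) (simp add: power2_diff algebra_simps)
  also have "\<dots> = 2 * real (card V) * (\<Sum>p\<in>V. (x p)\<^sup>2) - 2 * (\<Sum>p\<in>V. x p)\<^sup>2"
    by (simp add: sum.distrib sum_subtractf sum_distrib_left[symmetric] sum_distrib_right[symmetric]
        power2_eq_square)
  finally show ?thesis by simp
qed

lemma Lim_at_top_parallel_edge_term:
  fixes L :: real assumes L: "L > 0"
  shows "Lim at_top (\<lambda>R::real. L * R\<^sup>2 / (L + R)\<^sup>2) = L"
proof (rule tendsto_Lim)
  have "((\<lambda>R::real. L / R) \<longlongrightarrow> 0) at_top"
    by (intro tendsto_divide_0[OF tendsto_const] filterlim_at_top_imp_at_infinity[OF filterlim_ident])
  then have "((\<lambda>R::real. L * (1 / (1 + L / R))\<^sup>2) \<longlongrightarrow> L * (1 / (1 + 0))\<^sup>2) at_top"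
    by (intro tendsto_intros) auto
  moreover have "\<forall>\<^sub>F R in at_top. L * (1 / (1 + L / R))\<^sup>2 = L * R\<^sup>2 / (L + R)\<^sup>2"
    using eventually_gt_at_top[of 0]
  proof eventually_elim
    case (elim R)
    then have "1 + L / R = (L + R) / R" by (simp add: field_simps)
    then show ?case using elim L by (simp add: power_divide)
  qed
  ultimately show "((\<lambda>R::real. L * R\<^sup>2 / (L + R)\<^sup>2) \<longlongrightarrow> L) at_top"
    using tendsto_cong by fastforce
qed simp

locale resistor_network =
  fixes V :: "'v set" and E :: "'e set" and src tgt :: "'e \<Rightarrow> 'v" and len :: "'e \<Rightarrow> real"
  assumes finite_V: "finite V" and finite_E: "finite E"
    and edge_ends: "\<And>e. e \<in> E \<Longrightarrow> src e \<in> V \<and> tgt e \<in> V \<and> len e > 0"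
    and connected: "connected_net V E src tgt"
begin

abbreviation "lap \<equiv> laplacian E src tgt len"
abbreviation "form \<equiv> dirichlet_form E src tgt len"

lemma green_identity: "(\<Sum>w\<in>V. f w * lap g w) = form f g"
proof -
  have "(\<Sum>w\<in>V. f w * lap g w) = (\<Sum>e\<in>E. \<Sum>w\<in>V.
      (if src e = w then f w * (g w - g (tgt e)) / len e else 0)
      + (if tgt e = w then f w * (g w - g (src e)) / len e else 0))"
    unfolding laplacian_def sum_distrib_left
    by (subst sum.swap) (intro sum.cong refl, auto simp: distrib_left)
  also have "\<dots> = (\<Sum>e\<in>E. f (src e) * (g (src e) - g (tgt e)) / len e
                          + f (tgt e) * (g (tgt e) - g (src e)) / len e)"
    using edge_ends finite_V by (intro sum.cong refl) (simp add: sum.distrib)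
  also have "\<dots> = form f g"
    unfolding dirichlet_form_def
    by (intro sum.cong refl) (simp add: add_divide_distrib[symmetric] algebra_simps)
  finally show ?thesis .
qed

lemma sum_laplacian: "(\<Sum>w\<in>V. lap g w) = 0"
  using green_identity[of "\<lambda>_. 1" g] by (simp add: dirichlet_form_def)

lemma laplacian_eq_minus_sum_others:
  assumes "z \<in> V" shows "lap g z = - (\<Sum>w\<in>V - {z}. lap g w)"
  using sum.remove[OF finite_V assms, of "lap g"] sum_laplacian by simp

lemma dirichlet_form_commute: "form f g = form g f"
  unfolding dirichlet_form_def by (simp add: mult.commute)

lemma dirichlet_form_nonneg: "form f f \<ge> 0"
  unfolding dirichlet_form_def using edge_ends by (intro sum_nonneg divide_nonneg_pos) auto

lemma dirichlet_form_edge_le: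
  assumes "e \<in> E" shows "(f (src e) - f (tgt e))\<^sup>2 / len e \<le> form f f"
  unfolding dirichlet_form_def power2_eq_square
  using edge_ends finite_E assms
  by (intro member_le_sum[where f = "\<lambda>e. (f (src e) - f (tgt e)) * (f (src e) - f (tgt e)) / len e"])
     (auto intro!: divide_nonneg_pos)

lemma dirichlet_form_eq_0_imp_const:
  assumes "form f f = 0" "x \<in> V" "y \<in> V"
  shows "f x = f y"
proof -
  have "(f (src e) - f (tgt e)) * (f (src e) - f (tgt e)) / len e = 0" if "e \<in> E" for e
    using assms(1) finite_E edge_ends that unfolding dirichlet_form_def
    by (subst (asm) sum_nonneg_eq_0_iff) (auto intro!: divide_nonneg_pos)
  then have edge: "f (src e) = f (tgt e)" if "e \<in> E" for e
    using that edge_ends[OF that] by fastforce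
  have "(x, y) \<in> (edge_rel E src tgt)\<^sup>*"
    using connected assms unfolding connected_net_def by blast
  then show ?thesis
    by (induction rule: rtrancl_induct) (auto simp: edge_rel_def edge)
qed

lemma harmonic_imp_const:
  assumes "\<forall>w\<in>V. lap h w = 0" "x \<in> V" "y \<in> V"
  shows "h x = h y"
  using green_identity[of h h] assms dirichlet_form_eq_0_imp_const by simp

lemma voltage_exists:
  assumes y: "y \<in> V" and z: "z \<in> V"
  shows "\<exists>f. is_voltage V E src tgt len y z f"
proof -
  define F where "F f = (\<lambda>w. if w \<in> V then (if w = z then f z else lap f w) else 0)" for f
  have "\<exists>f. (\<forall>w. w \<notin> V \<longrightarrow> f w = 0) \<and> (\<forall>w\<in>V. F f w = (if w \<noteq> z \<and> w = y then 1 else 0))"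
  proof (rule supported_linear_inj_imp_surj[OF finite_V])
    show "F (\<lambda>w. f w + g w) = (\<lambda>w. F f w + F g w)" for f g
      by (auto simp: F_def laplacian_add)
    show "F (\<lambda>w. c * f w) = (\<lambda>w. c * F f w)" for c f
      by (auto simp: F_def laplacian_scale)
    fix f assume F0: "\<forall>w\<in>V. F f w = 0"
    then have fz: "f z = 0"
      using z by (auto simp: F_def)
    have lap_off_z: "\<forall>w\<in>V - {z}. lap f w = 0"
      using F0 by (auto simp: F_def split: if_splits)
    moreover have "lap f z = 0"
      unfolding laplacian_eq_minus_sum_others[OF z] using lap_off_z by simp
    ultimately have "\<forall>w\<in>V. lap f w = 0" by auto
    then show "\<forall>w\<in>V. f w = 0"
      using harmonic_imp_const z fz by metis
  qed
  then obtain f where outside: "\<forall>w. w \<notin> V \<longrightarrow> f w = 0"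
    and Ff: "\<forall>w\<in>V. F f w = (if w \<noteq> z \<and> w = y then 1 else 0)" by blast
  have lap_off_z: "\<forall>w\<in>V - {z}. lap f w = (if w = y then 1 else 0)"
    using Ff by (auto simp: F_def)
  have "(\<Sum>w\<in>V - {z}. lap f w) = (\<Sum>w\<in>V - {z}. if w = y then 1 else 0)"
    using lap_off_z by (intro sum.cong) auto
  then have "lap f z = - (if y \<noteq> z then 1 else 0)"
    unfolding laplacian_eq_minus_sum_others[OF z] using y finite_V by simp
  then have "is_voltage V E src tgt len y z f"
    unfolding is_voltage_iff_laplacian using outside Ff z lap_off_z by (auto simp: F_def)
  then show ?thesis by blast
qed

lemma voltage_unique:
  assumes z: "z \<in> V"
    and f: "is_voltage V E src tgt len y z f" and g: "is_voltage V E src tgt len y z g"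
  shows "f = g"
proof
  fix w
  have "\<forall>u\<in>V. lap (\<lambda>u. f u - g u) u = 0"
    using f g unfolding is_voltage_iff_laplacian by (simp add: laplacian_diff)
  then have "f w - g w = f z - g z" if "w \<in> V"
    using harmonic_imp_const[of "\<lambda>u. f u - g u", OF _ that z] by simp
  then show "f w = g w"
    using f g unfolding is_voltage_iff_laplacian by (cases "w \<in> V") auto
qed

definition pot :: "'v \<Rightarrow> 'v \<Rightarrow> 'v \<Rightarrow> real" where
  "pot y z = (THE f. is_voltage V E src tgt len y z f)"

abbreviation res :: "'v \<Rightarrow> 'v \<Rightarrow> real" where
  "res x y \<equiv> pot x y x"

lemma voltage_eq_pot: "voltage V E src tgt len z x y = pot y z x"
  unfolding voltage_def pot_def ..

lemma eff_res_eq_res: "eff_res V E src tgt len x y = res x y"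
  unfolding eff_res_def voltage_eq_pot ..

lemma pot_is_voltage: "y \<in> V \<Longrightarrow> z \<in> V \<Longrightarrow> is_voltage V E src tgt len y z (pot y z)"
  unfolding pot_def using voltage_exists voltage_unique by (metis theI)

lemma pot_eqI: "y \<in> V \<Longrightarrow> z \<in> V \<Longrightarrow> is_voltage V E src tgt len y z f \<Longrightarrow> pot y z = f"
  using pot_is_voltage voltage_unique by blast

lemma pot_sink: "y \<in> V \<Longrightarrow> z \<in> V \<Longrightarrow> pot y z z = 0"
  using pot_is_voltage unfolding is_voltage_iff_laplacian by blast

lemma laplacian_pot:
  "y \<in> V \<Longrightarrow> z \<in> V \<Longrightarrow> w \<in> V \<Longrightarrow> lap (pot y z) w = (if w = y then 1 else 0) - (if w = z then 1 else 0)"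
  using pot_is_voltage unfolding is_voltage_iff_laplacian by blast

lemma dirichlet_form_pot:
  assumes "y \<in> V" "z \<in> V"
  shows "form f (pot y z) = f y - f z"
proof -
  have "form f (pot y z) = (\<Sum>w\<in>V. f w * ((if w = y then 1 else 0) - (if w = z then 1 else 0)))"
    using green_identity[of f "pot y z"] laplacian_pot[OF assms] by simp
  also have "\<dots> = (\<Sum>w\<in>V. (if w = y then f w else 0) - (if w = z then f w else 0))"
    by (intro sum.cong) auto
  also have "\<dots> = f y - f z"
    using assms finite_V by (simp add: sum_subtractf)
  finally show ?thesis .
qed

lemma res_eq_energy: "x \<in> V \<Longrightarrow> y \<in> V \<Longrightarrow> form (pot x y) (pot x y) = res x y"
  using dirichlet_form_pot pot_sink by simp

lemma res_nonneg: "x \<in> V \<Longrightarrow> y \<in> V \<Longrightarrow> res x y \<ge> 0"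
  using res_eq_energy dirichlet_form_nonneg by metis

lemma pot_reciprocity: "x \<in> V \<Longrightarrow> y \<in> V \<Longrightarrow> z \<in> V \<Longrightarrow> pot y z x = pot x z y"
  using dirichlet_form_pot[of y z "pot x z"] dirichlet_form_pot[of x z "pot y z"] pot_sink
    dirichlet_form_commute by simp

lemma pot_swap:
  assumes "a \<in> V" "b \<in> V" "w \<in> V" shows "pot b a w = res a b - pot a b w"
proof -
  have "\<forall>w\<in>V. lap (\<lambda>w. pot b a w + pot a b w) w = 0"
    using assms by (simp add: laplacian_add laplacian_pot)
  from harmonic_imp_const[OF this assms(3) assms(1)] show ?thesis
    using pot_sink assms by simp
qed

lemma res_commute: "x \<in> V \<Longrightarrow> y \<in> V \<Longrightarrow> res x y = res y x"
  using pot_swap[of x y y] pot_sink by simp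

lemma pot_eq_res_combination:
  assumes a: "a \<in> V" and b: "b \<in> V" and x: "x \<in> V"
  shows "2 * pot a b x = res x b + res a b - res x a"
proof -
  have "\<forall>w\<in>V. lap (\<lambda>w. pot x b w - pot a b w - pot x a w) w = 0"
    using assms by (simp add: laplacian_diff laplacian_pot)
  from harmonic_imp_const[OF this a x]
  have "pot x b a - pot a b a - pot x a a = pot x b x - pot a b x - pot x a x" .
  then show ?thesis
    using pot_reciprocity[OF x a b] pot_sink assms by simp
qed

lemma dirichlet_form_truncation_le:
  assumes "mono m" "mono (\<lambda>t. t - m t)"
  shows "form (\<lambda>w. m (f w)) (\<lambda>w. m (f w)) \<le> form (\<lambda>w. m (f w)) f"
  unfolding dirichlet_form_def
proof (rule sum_mono)
  fix e assume e: "e \<in> E"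
  show "(m (f (src e)) - m (f (tgt e))) * (m (f (src e)) - m (f (tgt e))) / len e
      \<le> (m (f (src e)) - m (f (tgt e))) * (f (src e) - f (tgt e)) / len e"
    using truncation_sq_le[OF assms, of "f (src e)" "f (tgt e)"] edge_ends[OF e]
    by (intro divide_right_mono) (auto simp: power2_eq_square)
qed

text \<open>Maximum principle: truncating the potential below at 0 (resp. above at res a b) does
  not increase its energy, which forces the truncation to have energy 0.\<close>

lemma pot_bounds:
  assumes a: "a \<in> V" and b: "b \<in> V" and p: "p \<in> V"
  shows "0 \<le> pot a b p" "pot a b p \<le> res a b"
proof -
  have vanishing: "m (pot a b p) = 0"
    if "mono m" "mono (\<lambda>t. t - m t)" "m (res a b) = 0" "m 0 = 0" for m
  proof -
    have "form (\<lambda>w. m (pot a b w)) (\<lambda>w. m (pot a b w)) \<le> 0"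
      using dirichlet_form_truncation_le[OF that(1,2), of "pot a b"] dirichlet_form_pot[OF a b]
        pot_sink[OF a b] that(3,4) by simp
    then have "form (\<lambda>w. m (pot a b w)) (\<lambda>w. m (pot a b w)) = 0"
      using dirichlet_form_nonneg by (metis order_antisym)
    from dirichlet_form_eq_0_imp_const[OF this p b] show ?thesis
      using pot_sink[OF a b] that(4) by simp
  qed
  have "res a b \<ge> 0" using res_nonneg a b by blast
  moreover have "mono (\<lambda>t::real. min t 0)" "mono (\<lambda>t::real. t - min t 0)"
    by (auto intro!: monoI simp: min_def)
  moreover have "mono (\<lambda>t. max (t - res a b) 0)" "mono (\<lambda>t. t - max (t - res a b) 0)"
    by (auto intro!: monoI simp: max_def)
  ultimately have "min (pot a b p) 0 = 0" "max (pot a b p - res a b) 0 = 0"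
    using vanishing[of "\<lambda>t. min t 0"] vanishing[of "\<lambda>t. max (t - res a b) 0"] by simp_all
  then show "0 \<le> pot a b p" "pot a b p \<le> res a b"
    by (simp_all add: min_def max_def split: if_splits)
qed

lemma res_le_len:
  assumes e: "e \<in> E" shows "res (src e) (tgt e) \<le> len e"
proof -
  let ?a = "src e" and ?b = "tgt e"
  have a: "?a \<in> V" and b: "?b \<in> V" and L: "len e > 0" using edge_ends[OF e] by auto
  have "(res ?a ?b)\<^sup>2 / len e \<le> res ?a ?b"
    using dirichlet_form_edge_le[OF e, of "pot ?a ?b"] res_eq_energy[OF a b] pot_sink[OF a b]
    by simp
  then have "(res ?a ?b)\<^sup>2 \<le> res ?a ?b * len e"
    using L by (simp add: field_simps)
  then show ?thesis
    using res_nonneg[OF a b] L by (cases "res ?a ?b = 0") (auto simp: power2_eq_square)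
qed

definition res_gap :: "'e \<Rightarrow> 'v \<Rightarrow> real" where
  "res_gap e u = res (src e) u - res (tgt e) u"

definition gap_energy :: "'v \<Rightarrow> real" where
  "gap_energy p = (\<Sum>e\<in>E. (res_gap e p)\<^sup>2 / len e)"

lemma res_gap_eq:
  assumes "e \<in> E" "p \<in> V"
  shows "res_gap e p = res (src e) (tgt e) - 2 * pot (src e) (tgt e) p"
  using pot_eq_res_combination[of "src e" "tgt e" p] res_commute[of p] edge_ends assms
  unfolding res_gap_def by simp

lemma pot_edge_diff:
  assumes "p \<in> V" "q \<in> V" "e \<in> E"
  shows "pot p q (src e) - pot p q (tgt e) = (res_gap e q - res_gap e p) / 2"
  using pot_eq_res_combination[of p q "src e"] pot_eq_res_combination[of p q "tgt e"]
    edge_ends assms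
  unfolding res_gap_def by simp

lemma res_eq_edge_sum:
  assumes "p \<in> V" "q \<in> V"
  shows "res p q = (\<Sum>e\<in>E. (res_gap e q - res_gap e p)\<^sup>2 / (4 * len e))"
  unfolding res_eq_energy[OF assms, symmetric] dirichlet_form_def
  by (intro sum.cong refl) (simp add: pot_edge_diff[OF assms] power2_eq_square)

lemma res_gap_cross_sum:
  assumes "p \<in> V" "q \<in> V"
  shows "(\<Sum>e\<in>E. res_gap e q * (res_gap e q - res_gap e p) / len e) = 2 * res p q"
proof -
  have "(\<Sum>e\<in>E. res_gap e q * (res_gap e q - res_gap e p) / len e)
      = 2 * form (\<lambda>u. res u q) (pot p q)"
    unfolding dirichlet_form_def sum_distrib_left
    by (intro sum.cong refl) (simp add: pot_edge_diff[OF assms] res_gap_def)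
  also have "\<dots> = 2 * res p q"
    using dirichlet_form_pot[OF assms] pot_sink assms by simp
  finally show ?thesis .
qed

lemma gap_energy_indep:
  assumes p: "p \<in> V" and q: "q \<in> V"
  shows "gap_energy p = gap_energy q"
proof -
  have sq: "(\<Sum>e\<in>E. (res_gap e q - res_gap e p)\<^sup>2 / len e) = 4 * res p q"
    unfolding res_eq_edge_sum[OF p q] sum_distrib_left
    by (intro sum.cong refl) (simp add: field_simps edge_ends)
  have "gap_energy p = (\<Sum>e\<in>E. (res_gap e q - res_gap e p)\<^sup>2 / len e + (res_gap e q)\<^sup>2 / len e
      - 2 * (res_gap e q * (res_gap e q - res_gap e p) / len e))"
    unfolding gap_energy_def
    by (intro sum.cong refl) (simp add: power2_eq_square diff_divide_distrib add_divide_distrib algebra_simps)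
  also have "\<dots> = 4 * res p q + gap_energy q - 2 * (2 * res p q)"
    unfolding sum_subtractf sum.distrib sq gap_energy_def sum_distrib_left[symmetric]
      res_gap_cross_sum[OF p q] ..
  finally show ?thesis by simp
qed

lemma sum_res_le_gap_energy:
  assumes p0: "p0 \<in> V"
  shows "(\<Sum>p\<in>V. \<Sum>q\<in>V. res p q) \<le> (real (card V))\<^sup>2 / 2 * gap_energy p0"
proof -
  let ?n = "real (card V)"
  have "(\<Sum>p\<in>V. \<Sum>q\<in>V. res p q)
      = (\<Sum>e\<in>E. 1 / (4 * len e) * (\<Sum>p\<in>V. \<Sum>q\<in>V. (res_gap e q - res_gap e p)\<^sup>2))"
    by (simp add: res_eq_edge_sum sum_distrib_left sum.swap[of _ E] cong: sum.cong)
  also have "\<dots> \<le> (\<Sum>e\<in>E. 1 / (4 * len e) * (2 * ?n * (\<Sum>p\<in>V. (res_gap e p)\<^sup>2)))"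
    by (intro sum_mono mult_left_mono sum_sq_diff_le) (simp add: edge_ends less_imp_le)
  also have "\<dots> = ?n / 2 * (\<Sum>p\<in>V. gap_energy p)"
    unfolding gap_energy_def sum_distrib_left
    by (subst sum.swap) (intro sum.cong refl, simp add: field_simps sum_divide_distrib edge_ends)
  also have "\<dots> = ?n / 2 * (?n * gap_energy p0)"
    using gap_energy_indep[OF _ p0] by simp
  finally show ?thesis by (simp add: power2_eq_square)
qed

lemma res_gap_bounds:
  assumes e: "e \<in> E" and p: "p \<in> V"
  shows "(res_gap e p)\<^sup>2 \<le> (res (src e) (tgt e))\<^sup>2" "(res_gap e p)\<^sup>2 \<le> (len e)\<^sup>2"
proof -
  have a: "src e \<in> V" and b: "tgt e \<in> V" using edge_ends[OF e] by auto
  have "\<bar>res_gap e p\<bar> \<le> res (src e) (tgt e)"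
    using pot_bounds[OF a b p] res_gap_eq[OF e p] by linarith
  then show "(res_gap e p)\<^sup>2 \<le> (res (src e) (tgt e))\<^sup>2"
    by (metis abs_ge_zero power2_abs power_mono)
  also have "\<dots> \<le> (len e)\<^sup>2"
    using res_le_len[OF e] res_nonneg[OF a b] by (intro power_mono) auto
  finally show "(res_gap e p)\<^sup>2 \<le> (len e)\<^sup>2" .
qed

lemma resistor_network_delete_edge:
  "connected_net V (E - {e}) src tgt \<Longrightarrow> resistor_network V (E - {e}) src tgt len"
  using finite_V finite_E edge_ends by unfold_locales auto

text \<open>Series-parallel law: the unit current from one end of e to the other splits between e
  and the rest of the network in the ratio R : len e.\<close>

lemma pot_delete_edge:
  assumes e: "e \<in> E" and conn: "connected_net V (E - {e}) src tgt"
  defines "R \<equiv> eff_res V (E - {e}) src tgt len (src e) (tgt e)"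
  shows "pot (src e) (tgt e)
    = (\<lambda>w. len e / (len e + R) * voltage V (E - {e}) src tgt len (tgt e) w (src e))"
proof -
  interpret sub: resistor_network V "E - {e}" src tgt len
    using resistor_network_delete_edge[OF conn] .
  let ?a = "src e" and ?b = "tgt e" and ?L = "len e"
  have a: "?a \<in> V" and b: "?b \<in> V" and L: "?L > 0" using edge_ends[OF e] by auto
  have R: "R = sub.res ?a ?b" and "R \<ge> 0"
    unfolding R_def sub.eff_res_eq_res using sub.res_nonneg[OF a b] by auto
  then have LR: "?L + R > 0" using L by linarith
  define \<chi> where "\<chi> w = ?L / (?L + R) * sub.pot ?a ?b w" for w
  have \<chi>a: "\<chi> ?a = ?L * R / (?L + R)" and \<chi>b: "\<chi> ?b = 0"
    unfolding \<chi>_def R using sub.pot_sink[OF a b] by auto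
  have edge_term: "(if ?a = w then (\<chi> w - \<chi> ?b) / ?L else 0) + (if ?b = w then (\<chi> w - \<chi> ?a) / ?L else 0)
      = R / (?L + R) * ((if w = ?a then 1 else 0) - (if w = ?b then 1 else 0))" for w
    using \<chi>a \<chi>b L by auto
  have "is_voltage V E src tgt len ?a ?b \<chi>"
    unfolding is_voltage_iff_laplacian
  proof (intro conjI ballI allI impI)
    show "\<chi> w = 0" if "w \<notin> V" for w
      using sub.pot_is_voltage[OF a b] that unfolding is_voltage_iff_laplacian \<chi>_def by simp
    show "\<chi> ?b = 0" by (fact \<chi>b)
    fix w assume w: "w \<in> V"
    have "sub.lap \<chi> w = ?L / (?L + R) * ((if w = ?a then 1 else 0) - (if w = ?b then 1 else 0))"
      unfolding \<chi>_def laplacian_scale sub.laplacian_pot[OF a b w] ..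
    then have "lap \<chi> w = (?L / (?L + R) + R / (?L + R)) * ((if w = ?a then 1 else 0) - (if w = ?b then 1 else 0))"
      unfolding laplacian_remove_edge[OF finite_E e] edge_term by (simp add: distrib_right)
    also have "?L / (?L + R) + R / (?L + R) = 1"
      using LR by (simp add: add_divide_distrib[symmetric])
    finally show "lap \<chi> w = (if w = ?a then 1 else 0) - (if w = ?b then 1 else 0)" by simp
  qed
  then show ?thesis
    using pot_eqI[OF a b] unfolding \<chi>_def sub.voltage_eq_pot by auto
qed

lemma y_terms_delete_edge:
  assumes e: "e \<in> E" and conn: "connected_net V (E - {e}) src tgt" and p: "p \<in> V"
  shows "y_term1 V E src tgt len e = (res (src e) (tgt e))\<^sup>2 / len e"
    and "y_term2 V E src tgt len p e = (res_gap e p)\<^sup>2 / len e"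
proof -
  interpret sub: resistor_network V "E - {e}" src tgt len
    using resistor_network_delete_edge[OF conn] .
  let ?a = "src e" and ?b = "tgt e" and ?L = "len e"
  let ?\<psi> = "sub.pot ?a ?b" and ?R = "sub.res ?a ?b"
  have a: "?a \<in> V" and b: "?b \<in> V" and L: "?L \<noteq> 0" using edge_ends[OF e] by auto
  have pot: "pot ?a ?b = (\<lambda>w. ?L / (?L + ?R) * ?\<psi> w)"
    using pot_delete_edge[OF e conn] unfolding sub.eff_res_eq_res sub.voltage_eq_pot .
  have square: "(?L * x / (?L + ?R))\<^sup>2 / ?L = ?L * x\<^sup>2 / (?L + ?R)\<^sup>2" for x
    using L by (simp add: power_divide power_mult_distrib power2_eq_square)
  have "res ?a ?b = ?L * ?R / (?L + ?R)"
    using pot by simp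
  then show "y_term1 V E src tgt len e = (res ?a ?b)\<^sup>2 / ?L"
    unfolding y_term1_def using conn by (simp add: Let_def sub.eff_res_eq_res square)
  have "res_gap e p = ?L * ((?R - ?\<psi> p) - ?\<psi> p) / (?L + ?R)"
    unfolding res_gap_eq[OF e p] using pot by (simp add: diff_divide_distrib right_diff_distrib)
  moreover have "sub.pot ?b ?a p = ?R - ?\<psi> p"
    using sub.pot_swap[OF a b p] .
  ultimately show "y_term2 V E src tgt len p e = (res_gap e p)\<^sup>2 / ?L"
    unfolding y_term2_def using conn
    by (simp add: Let_def sub.eff_res_eq_res sub.voltage_eq_pot square)
qed

lemma y_terms_bridge:
  assumes e: "e \<in> E" and bridge: "\<not> connected_net V (E - {e}) src tgt"
  shows "y_term1 V E src tgt len e = len e" "y_term2 V E src tgt len p e = len e"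
  using Lim_at_top_parallel_edge_term[of "len e"] edge_ends[OF e] bridge
  unfolding y_term1_def y_term2_def by simp_all

lemma gap_energy_le_y_inv:
  assumes p: "p \<in> V"
  shows "gap_energy p \<le> y_inv V E src tgt len p"
proof -
  have "(res_gap e p)\<^sup>2 / len e \<le> y_term1 V E src tgt len e \<and>
        (res_gap e p)\<^sup>2 / len e \<le> y_term2 V E src tgt len p e" if e: "e \<in> E" for e
  proof (cases "connected_net V (E - {e}) src tgt")
    case True
    show ?thesis
      unfolding y_terms_delete_edge[OF e True p]
      using res_gap_bounds[OF e p] edge_ends[OF e] by (simp add: divide_right_mono)
  next
    case False
    have "(res_gap e p)\<^sup>2 / len e \<le> (len e)\<^sup>2 / len e"
      using res_gap_bounds[OF e p] edge_ends[OF e] by (simp add: divide_right_mono)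
    then show ?thesis
      unfolding y_terms_bridge[OF e False] by (simp add: power2_eq_square)
  qed
  then have "gap_energy p \<le> (\<Sum>e\<in>E. y_term1 V E src tgt len e)"
    and "gap_energy p \<le> (\<Sum>e\<in>E. y_term2 V E src tgt len p e)"
    unfolding gap_energy_def by (auto intro: sum_mono)
  then show ?thesis unfolding y_inv_def by linarith
qed

end

theorem corollary3p15:
  fixes V :: "'v set" and E :: "'e set" and src tgt :: "'e \<Rightarrow> 'v" and len :: "'e \<Rightarrow> real"
    and p :: 'v
  assumes "metrized_graph V E src tgt len" and "p \<in> V"
  shows "kirchhoff_index V E src tgt len
           \<le> (real (card V))\<^sup>2 / 4 * y_inv V E src tgt len p"
proof -
  interpret resistor_network V E src tgt len
    using assms(1) unfolding metrized_graph_def by unfold_locales auto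
  have "kirchhoff_index V E src tgt len = (1/2) * (\<Sum>p\<in>V. \<Sum>q\<in>V. res p q)"
    unfolding kirchhoff_index_def eff_res_eq_res ..
  also have "\<dots> \<le> (real (card V))\<^sup>2 / 4 * gap_energy p"
    using sum_res_le_gap_energy[OF assms(2)] by simp
  also have "\<dots> \<le> (real (card V))\<^sup>2 / 4 * y_inv V E src tgt len p"
    using gap_energy_le_y_inv[OF assms(2)] by (intro mult_left_mono) auto
  finally show ?thesis .
qed

end
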